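(* Let $u$ be a coherent utility on $L^0$ with determining set $\mathcal{D}$, and let $Y$ be a random variable or random vector. Then for every $X\in L^1_s(\mathcal{D})\cap L^1_s(\mathsf{E}(\mathcal{D}\mid Y))\cap L^1$ we have $$u^f(X;Y)=u(\mathsf{E}(X\mid Y)).$$
   Context: Let $(\Omega,\mathcal{F},\mathsf{P})$ be a probability space, $L^0$ the space of all real random variables, $L^1=L^1(\mathsf{P})$, and $\mathcal{P}$ the set of probability measures on $\mathcal{F}$ absolutely continuous with respect to $\mathsf{P}$; measures $\mathsf{Q}\in\mathcal{P}$ are identified with their densities $Z=d\mathsf{Q}/d\mathsf{P}$. For $\mathsf{Q}\in\mathcal{P}$ and $X\in L^0$, $\mathsf{E}_\mathsf{Q}X:=\mathsf{E}_\mathsf{Q}X^+-\mathsf{E}_\mathsf{Q}X^-$ with the convention $\infty-\infty=-\infty$; $\mathsf{E}$ denotes expectation under $\mathsf{P}$. A coherent utility on $L^0$ is a map $u:L^0\to[-\infty,\infty]$ of the form $u(X)=\inf_{\mathsf{Q}\in\mathcal{D}}\mathsf{E}_\mathsf{Q}X$ for a nonempty $\mathcal{D}\subseteq\mathcal{P}$; its determining set is the largest such set, namely $\{\mathsf{Q}\in\mathcal{P}:\mathsf{E}_\mathsf{Q}X\ge u(X)\ \forall X\in L^0\}$. For a set $\mathcal{C}\subseteq\mathcal{P}$, $L^1_s(\mathcal{C})=\{X\in L^0:\lim_{n\to\infty}\sup_{\mathsf{Q}\in\mathcal{C}}\mathsf{E}_\mathsf{Q}|X|I(|X|>n)=0\}$.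 For a random vector $Y$, $\mathsf{E}(\mathcal{D}\mid Y):=\{\mathsf{E}(Z\mid Y):Z\in\mathcal{D}\}$ (again a subset of $\mathcal{P}$ via densities), and the factor utility is $u^f(X;Y):=\inf_{\mathsf{Q}\in\mathsf{E}(\mathcal{D}\mid Y)}\mathsf{E}_\mathsf{Q}X$. *)

theory Defs
  imports "HOL-Probability.Probability"
begin

definition dens :: "'a measure \<Rightarrow> ('a \<Rightarrow> real) \<Rightarrow> bool" where
  "dens M Z \<longleftrightarrow> Z \<in> borel_measurable M \<and> (\<forall>x\<in>space M. 0 \<le> Z x)
      \<and> (\<integral>\<^sup>+ x. ennreal (Z x) \<partial>M) = 1"

text \<open>E_Q X = E_Q X^+ - E_Q X^- with the convention \<infinity> - \<infinity> = -\<infinity>, Q given by density Z.\<close>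
definition EQ :: "'a measure \<Rightarrow> ('a \<Rightarrow> real) \<Rightarrow> ('a \<Rightarrow> real) \<Rightarrow> ereal" where
  "EQ M Z X = (let p = (\<integral>\<^sup>+ x. ennreal (Z x * max (X x) 0) \<partial>M);
                   n = (\<integral>\<^sup>+ x. ennreal (Z x * max (- X x) 0) \<partial>M)
               in if p = \<infinity> \<and> n = \<infinity> then - \<infinity> else enn2ereal p - enn2ereal n)"

definition L1s :: "'a measure \<Rightarrow> ('a \<Rightarrow> real) set \<Rightarrow> ('a \<Rightarrow> real) set" where
  "L1s M C = {X \<in> borel_measurable M.
     (\<lambda>n::nat. SUP Z\<in>C. \<integral>\<^sup>+ x. ennreal (Z x * \<bar>X x\<bar> * indicator {y. \<bar>X y\<bar> > real n} x) \<partial>M)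
       \<longlonglongrightarrow> 0}"

text \<open>Coherent utility on L^0 (values on L^0 only matter).\<close>
definition coherent_utility :: "'a measure \<Rightarrow> (('a \<Rightarrow> real) \<Rightarrow> ereal) \<Rightarrow> bool" where
  "coherent_utility M u \<longleftrightarrow> (\<exists>D0. D0 \<noteq> {} \<and> (\<forall>Z\<in>D0. dens M Z) \<and>
      (\<forall>X\<in>borel_measurable M. u X = (INF Z\<in>D0. EQ M Z X)))"

definition determining_set :: "'a measure \<Rightarrow> (('a \<Rightarrow> real) \<Rightarrow> ereal) \<Rightarrow> ('a \<Rightarrow> real) set" where
  "determining_set M u = {Z. dens M Z \<and> (\<forall>X\<in>borel_measurable M. u X \<le> EQ M Z X)}"

definition sigY :: "'a measure \<Rightarrow> ('a \<Rightarrow> 'b::euclidean_space) \<Rightarrow> 'a measure" where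
  "sigY M Y = vimage_algebra (space M) Y borel"

definition condE :: "'a measure \<Rightarrow> ('a \<Rightarrow> 'b::euclidean_space) \<Rightarrow> ('a \<Rightarrow> real) \<Rightarrow> ('a \<Rightarrow> real)" where
  "condE M Y X = real_cond_exp M (sigY M Y) X"

definition condE_set :: "'a measure \<Rightarrow> ('a \<Rightarrow> 'b::euclidean_space) \<Rightarrow> ('a \<Rightarrow> real) set \<Rightarrow> ('a \<Rightarrow> real) set" where
  "condE_set M Y D = condE M Y ` D"

definition factor_utility :: "'a measure \<Rightarrow> ('a \<Rightarrow> real) set \<Rightarrow> ('a \<Rightarrow> real) \<Rightarrow> ('a \<Rightarrow> 'b::euclidean_space) \<Rightarrow> ereal" where
  "factor_utility M D X Y = (INF Z\<in>condE_set M Y D. EQ M Z X)"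

end

theory Submission
  imports Defs
begin

text \<open>
  For a density \<open>Z\<close> and \<open>\<F> = \<sigma>(Y)\<close>, conditional expectation is self-adjoint:
  \<open>E[E(Z|\<F>) X] = E[Z E(X|\<F>)]\<close>. Membership of \<open>X\<close> in \<open>L\<^sup>1\<^sub>s(E(\<D>|Y))\<close> makes
  \<open>E(Z|\<F>) X\<close> integrable, and \<open>|E(X|\<F>)| \<le> E(|X| | \<F>)\<close> then makes \<open>Z E(X|\<F>)\<close>
  integrable, so both sides are genuine integrals. Taking the infimum over \<open>Z \<in> \<D>\<close> gives
  \<open>u\<^sup>f(X;Y) = inf\<^sub>Z E\<^sub>Z E(X|Y) = u(E(X|Y))\<close>, the last step because \<open>\<D>\<close> is the largest
  set representing \<open>u\<close>.
\<close>

lemma EQ_eq_integral: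
  assumes [measurable]: "Z \<in> borel_measurable M" and nonneg: "AE x in M. 0 \<le> Z x"
    and int: "integrable M (\<lambda>x. Z x * X x)"
  shows "EQ M Z X = ereal (\<integral>x. Z x * X x \<partial>M)"
proof -
  obtain r q where "0 \<le> r" "0 \<le> q"
      and pos: "(\<integral>\<^sup>+x. ennreal (Z x * X x) \<partial>M) = ennreal r"
      and neg: "(\<integral>\<^sup>+x. ennreal (- (Z x * X x)) \<partial>M) = ennreal q"
      and "(\<lambda>x. Z x * X x) \<in> borel_measurable M"
      and integral: "(\<integral>x. Z x * X x \<partial>M) = r - q"
    by (rule integrableE[OF int])
  have "ennreal (Z x * max (X x) 0) = ennreal (Z x * X x)"
    and "ennreal (Z x * max (- X x) 0) = ennreal (- (Z x * X x))" if "0 \<le> Z x" for x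
    using that by (auto simp: ennreal_neg mult_nonneg_nonpos max_def)
  with nonneg have "(\<integral>\<^sup>+x. ennreal (Z x * max (X x) 0) \<partial>M) = ennreal r"
      and "(\<integral>\<^sup>+x. ennreal (Z x * max (- X x) 0) \<partial>M) = ennreal q"
    unfolding pos[symmetric] neg[symmetric] by (auto intro!: nn_integral_cong_AE)
  with \<open>0 \<le> r\<close> \<open>0 \<le> q\<close> integral show ?thesis
    unfolding EQ_def Let_def by simp
qed

lemma integrable_imp_nn_integral_less_top:
  fixes f :: "'a \<Rightarrow> real"
  assumes "integrable M f"
  shows "(\<integral>\<^sup>+x. ennreal (f x) \<partial>M) < \<infinity>"
proof -
  have "(\<integral>\<^sup>+x. ennreal (f x) \<partial>M) \<le> (\<integral>\<^sup>+x. ennreal (norm (f x)) \<partial>M)"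
    by (intro nn_integral_mono ennreal_leI) simp
  also have "\<dots> < \<infinity>"
    using assms by (simp add: integrable_iff_bounded)
  finally show ?thesis .
qed

lemma L1s_nn_integral_mult_abs_finite:
  assumes "X \<in> L1s M C" and "W \<in> C" and "integrable M W"
  shows "(\<integral>\<^sup>+x. ennreal (W x * \<bar>X x\<bar>) \<partial>M) < \<infinity>"
proof -
  let ?tail = "\<lambda>(n::nat) Z. \<integral>\<^sup>+x. ennreal (Z x * \<bar>X x\<bar> * indicator {y. \<bar>X y\<bar> > real n} x) \<partial>M"
  have [measurable]: "X \<in> borel_measurable M" "W \<in> borel_measurable M"
    and tails: "(\<lambda>n. SUP Z\<in>C. ?tail n Z) \<longlonglongrightarrow> 0"
    using assms unfolding L1s_def by auto
  have "eventually (\<lambda>n. (SUP Z\<in>C. ?tail n Z) < 1) sequentially"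
    using order_tendstoD(2)[OF tails zero_less_one] .
  then obtain n where "(SUP Z\<in>C. ?tail n Z) < 1"
    by (auto simp: eventually_sequentially)
  with \<open>W \<in> C\<close> have tail: "?tail n W < 1"
    by (rule le_less_trans[OF SUP_upper])
  have split: "ennreal (W x * \<bar>X x\<bar>)
      \<le> ennreal (W x * \<bar>X x\<bar> * indicator {y. \<bar>X y\<bar> > real n} x) + real n * ennreal (W x)" for x
  proof (cases "0 \<le> W x \<and> \<bar>X x\<bar> \<le> real n")
    case True
    then have "ennreal (W x * \<bar>X x\<bar>) \<le> ennreal (real n * W x)"
      using mult_left_mono[of "\<bar>X x\<bar>" "real n" "W x"] by (simp add: ennreal_leI mult.commute)
    also have "\<dots> = real n * ennreal (W x)"
      using True by (simp add: ennreal_mult)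
    finally show ?thesis by (rule add_increasing[rotated]) simp
  qed (auto simp: ennreal_neg mult_nonpos_nonneg indicator_def)
  have W_finite: "(\<integral>\<^sup>+x. ennreal (W x) \<partial>M) < \<infinity>"
    using \<open>integrable M W\<close> by (rule integrable_imp_nn_integral_less_top)
  have "(\<integral>\<^sup>+x. ennreal (W x * \<bar>X x\<bar>) \<partial>M)
      \<le> (\<integral>\<^sup>+x. ennreal (W x * \<bar>X x\<bar> * indicator {y. \<bar>X y\<bar> > real n} x) + real n * ennreal (W x) \<partial>M)"
    by (intro nn_integral_mono split)
  also have "\<dots> = ?tail n W + real n * (\<integral>\<^sup>+x. ennreal (W x) \<partial>M)"
    by (simp add: nn_integral_add nn_integral_cmult)
  also have "\<dots> < \<infinity>"
  proof -
    have "?tail n W < \<infinity>"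
      using less_trans[OF tail ennreal_one_less_top] by simp
    moreover have "real n * (\<integral>\<^sup>+x. ennreal (W x) \<partial>M) < \<infinity>"
      using W_finite by (simp add: ennreal_mult_less_top)
    ultimately show ?thesis by simp
  qed
  finally show ?thesis .
qed

context sigma_finite_subalgebra
begin

lemma nn_cond_exp_eq_real_cond_exp_nonneg:
  assumes "integrable M Z" and "AE x in M. 0 \<le> Z x"
  shows "AE x in M. nn_cond_exp M F (\<lambda>x. ennreal (Z x)) x = ennreal (real_cond_exp M F Z x)"
proof -
  have [measurable]: "Z \<in> borel_measurable M"
    using assms(1) by simp
  have "AE x in M. nn_cond_exp M F (\<lambda>x. ennreal (- Z x)) x = nn_cond_exp M F (\<lambda>x. 0) x"
    by (rule nn_cond_exp_cong) (use assms(2) in \<open>auto simp: ennreal_neg\<close>)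
  moreover have "AE x in M. 0 = nn_cond_exp M F (\<lambda>x. 0 :: ennreal) x"
    by (rule nn_cond_exp_F_meas) simp
  moreover have "AE x in M. nn_cond_exp M F (\<lambda>x. ennreal (Z x)) x \<noteq> \<infinity>"
  proof (rule nn_integral_PInf_AE)
    have "(\<integral>\<^sup>+x. nn_cond_exp M F (\<lambda>x. ennreal (Z x)) x \<partial>M)
        = (\<integral>\<^sup>+x. 1 * nn_cond_exp M F (\<lambda>x. ennreal (Z x)) x \<partial>M)"
      by simp
    also have "\<dots> = (\<integral>\<^sup>+x. 1 * ennreal (Z x) \<partial>M)"
      by (rule nn_cond_exp_intg) simp_all
    also have "\<dots> < \<infinity>"
      using integrable_imp_nn_integral_less_top[OF assms(1)] by simp
    finally show "(\<integral>\<^sup>+x. nn_cond_exp M F (\<lambda>x. ennreal (Z x)) x \<partial>M) \<noteq> \<infinity>"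
      by simp
  qed simp
  ultimately show ?thesis
    unfolding real_cond_exp_def by eventually_elim (auto simp: less_top[symmetric])
qed

lemma nn_integral_mult_abs_real_cond_exp_le:
  assumes "integrable M Z" and Z_nonneg: "AE x in M. 0 \<le> Z x"
    and [measurable]: "X \<in> borel_measurable M"
  shows "(\<integral>\<^sup>+x. ennreal (Z x * \<bar>real_cond_exp M F X x\<bar>) \<partial>M)
    \<le> (\<integral>\<^sup>+x. ennreal (real_cond_exp M F Z x * \<bar>X x\<bar>) \<partial>M)"
proof -
  have [measurable]: "Z \<in> borel_measurable M"
    using assms(1) by simp
  let ?nZ = "nn_cond_exp M F (\<lambda>x. ennreal (Z x))"
  let ?nX = "nn_cond_exp M F (\<lambda>x. ennreal \<bar>X x\<bar>)"
  have "(\<integral>\<^sup>+x. ennreal (Z x * \<bar>real_cond_exp M F X x\<bar>) \<partial>M) \<le> (\<integral>\<^sup>+x. ?nX x * ennreal (Z x) \<partial>M)"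
  proof (rule nn_integral_mono_AE)
    show "AE x in M. ennreal (Z x * \<bar>real_cond_exp M F X x\<bar>) \<le> ?nX x * ennreal (Z x)"
      using real_cond_exp_abs[OF \<open>X \<in> borel_measurable M\<close>] Z_nonneg
      by eventually_elim (simp add: ennreal_mult mult.commute mult_left_mono)
  qed
  also have "\<dots> = (\<integral>\<^sup>+x. ?nX x * ?nZ x \<partial>M)"
    by (rule nn_cond_exp_intg[symmetric]) simp_all
  also have "\<dots> = (\<integral>\<^sup>+x. ?nZ x * ennreal \<bar>X x\<bar> \<partial>M)"
    by (subst mult.commute) (rule nn_cond_exp_intg; simp)
  also have "\<dots> = (\<integral>\<^sup>+x. ennreal (real_cond_exp M F Z x * \<bar>X x\<bar>) \<partial>M)"
    using nn_cond_exp_eq_real_cond_exp_nonneg[OF assms(1,2)] real_cond_exp_pos[OF Z_nonneg]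
    by (intro nn_integral_cong_AE) (auto simp: ennreal_mult)
  finally show ?thesis .
qed

lemma integral_real_cond_exp_mult_swap:
  assumes [measurable]: "Z \<in> borel_measurable M" "X \<in> borel_measurable M"
    and "integrable M (\<lambda>x. real_cond_exp M F Z x * X x)"
    and "integrable M (\<lambda>x. Z x * real_cond_exp M F X x)"
  shows "(\<integral>x. real_cond_exp M F Z x * X x \<partial>M) = (\<integral>x. Z x * real_cond_exp M F X x \<partial>M)"
proof -
  have "(\<integral>x. real_cond_exp M F Z x * X x \<partial>M)
      = (\<integral>x. real_cond_exp M F Z x * real_cond_exp M F X x \<partial>M)"
    using assms(3) by (intro real_cond_exp_intg(2)[symmetric]) simp_all
  also have "\<dots> = (\<integral>x. real_cond_exp M F X x * Z x \<partial>M)"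
    using assms(4) by (subst mult.commute) (intro real_cond_exp_intg(2); simp add: mult.commute)
  finally show ?thesis
    by (simp add: mult.commute)
qed

lemma EQ_real_cond_exp_swap:
  assumes Z: "integrable M Z" "AE x in M. 0 \<le> Z x" and "integrable M X"
    and cZX_finite: "(\<integral>\<^sup>+x. ennreal (real_cond_exp M F Z x * \<bar>X x\<bar>) \<partial>M) < \<infinity>"
  shows "EQ M (real_cond_exp M F Z) X = EQ M Z (real_cond_exp M F X)"
proof -
  have [measurable]: "Z \<in> borel_measurable M" "X \<in> borel_measurable M"
    using assms by simp_all
  have cZ_nonneg: "AE x in M. 0 \<le> real_cond_exp M F Z x"
    using Z by (intro real_cond_exp_pos) simp_all
  have "(\<integral>\<^sup>+x. ennreal (norm (real_cond_exp M F Z x * X x)) \<partial>M)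
      = (\<integral>\<^sup>+x. ennreal (real_cond_exp M F Z x * \<bar>X x\<bar>) \<partial>M)"
    using cZ_nonneg by (intro nn_integral_cong_AE) (auto simp: abs_mult)
  with cZX_finite have int1: "integrable M (\<lambda>x. real_cond_exp M F Z x * X x)"
    by (intro integrableI_bounded) simp_all
  have "(\<integral>\<^sup>+x. ennreal (norm (Z x * real_cond_exp M F X x)) \<partial>M)
      = (\<integral>\<^sup>+x. ennreal (Z x * \<bar>real_cond_exp M F X x\<bar>) \<partial>M)"
    using Z(2) by (intro nn_integral_cong_AE) (auto simp: abs_mult)
  also have "\<dots> < \<infinity>"
    using nn_integral_mult_abs_real_cond_exp_le[OF Z \<open>X \<in> borel_measurable M\<close>] cZX_finite
    by (rule le_less_trans)
  finally have int2: "integrable M (\<lambda>x. Z x * real_cond_exp M F X x)"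
    by (intro integrableI_bounded) simp_all
  show ?thesis
    using cZ_nonneg Z(2) int1 int2 integral_real_cond_exp_mult_swap
    by (simp add: EQ_eq_integral)
qed

end

lemma sigma_finite_subalgebra_sigY:
  assumes "finite_measure M" and "Y \<in> borel_measurable M"
  shows "sigma_finite_subalgebra M (sigY M Y)"
proof (rule finite_measure_subalgebra_is_sigma_finite)
  have "subalgebra M (sigY M Y)"
    unfolding subalgebra_def sigY_def
    using measurable_sets[OF assms(2)] by (auto simp: sets_vimage_algebra2)
  with assms(1) show "finite_measure_subalgebra M (sigY M Y)"
    by (simp add: finite_measure_subalgebra_def finite_measure_subalgebra_axioms_def)
qed

lemma coherent_utility_eq_INF_determining_set:
  assumes "coherent_utility M u" and "X \<in> borel_measurable M"
  shows "u X = (INF Z\<in>determining_set M u. EQ M Z X)"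
proof (rule antisym)
  show "u X \<le> (INF Z\<in>determining_set M u. EQ M Z X)"
    using assms(2) by (auto simp: determining_set_def intro: INF_greatest)
  obtain D0 where "\<forall>Z\<in>D0. dens M Z" and u_eq: "\<forall>X\<in>borel_measurable M. u X = (INF Z\<in>D0. EQ M Z X)"
    using assms(1) unfolding coherent_utility_def by blast
  then have "D0 \<subseteq> determining_set M u"
    by (auto simp: determining_set_def intro: INF_lower)
  then have "(INF Z\<in>determining_set M u. EQ M Z X) \<le> (INF Z\<in>D0. EQ M Z X)"
    by (rule INF_superset_mono) simp
  with u_eq assms(2) show "(INF Z\<in>determining_set M u. EQ M Z X) \<le> u X"
    by simp
qed

theorem theorem3p3:
  fixes M :: "'a measure" and u :: "('a \<Rightarrow> real) \<Rightarrow> ereal"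
    and Y :: "'a \<Rightarrow> 'b::euclidean_space" and X :: "'a \<Rightarrow> real"
  assumes "prob_space M"
    and "coherent_utility M u"
    and "D = determining_set M u"
    and "Y \<in> borel_measurable M"
    and "X \<in> L1s M D" and "X \<in> L1s M (condE_set M Y D)" and "integrable M X"
  shows "factor_utility M D X Y = u (condE M Y X)"
proof -
  interpret sigma_finite_subalgebra M "sigY M Y"
    using assms(1,4) by (intro sigma_finite_subalgebra_sigY) (simp_all add: prob_space_def)
  have swap: "EQ M (condE M Y Z) X = EQ M Z (condE M Y X)" if "Z \<in> D" for Z
  proof -
    from that have Z: "integrable M Z" "AE x in M. 0 \<le> Z x"
      unfolding assms(3) determining_set_def dens_def by (auto intro: integrableI_nonneg)
    from that have "condE M Y Z \<in> condE_set M Y D"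
      by (simp add: condE_set_def)
    then have "(\<integral>\<^sup>+x. ennreal (condE M Y Z x * \<bar>X x\<bar>) \<partial>M) < \<infinity>"
      using assms(6) real_cond_exp_int(1)[OF Z(1)]
      by (intro L1s_nn_integral_mult_abs_finite) (simp_all add: condE_def)
    with Z assms(7) show ?thesis
      unfolding condE_def by (rule EQ_real_cond_exp_swap)
  qed
  have "factor_utility M D X Y = (INF Z\<in>D. EQ M (condE M Y Z) X)"
    by (simp add: factor_utility_def condE_set_def image_image)
  also have "\<dots> = (INF Z\<in>D. EQ M Z (condE M Y X))"
    using swap by simp
  also have "\<dots> = u (condE M Y X)"
    using coherent_utility_eq_INF_determining_set[OF assms(2)] assms(3) by (simp add: condE_def)
  finally show ?thesis .
qed

end
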